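(* Let $1\le q<p<\infty$ and $z>m_{p,q}$ with $z^*=(z^q,1)\in\mathcal J_p$. Then $$\inf\{\Lambda_p^*(t_1,t_2):\ t_1,t_2>0,\ t_1^{1/q}t_2^{-1/p}=z\}=\Lambda_p^*(z^* ),$$ and $z^*$ is the unique point of the set $\{(t_1,t_2):t_1,t_2>0,\ t_1^{1/q}t_2^{-1/p}=z\}$ at which this infimum is attained.
   Context: Let $f_p(x)=\frac{1}{2p^{1/p}\Gamma(1+1/p)}e^{-|x|^p/p}$, $m_{p,q}=(\int_{\mathbb R}|x|^qf_p(x)dx)^{1/q}$. For $\tau\in\mathbb R^2$, $\Lambda_p(\tau)=\log\int_{\mathbb R}e^{\tau_1|y|^q+\tau_2|y|^p}f_p(y)\,dy$, finite exactly on $\mathcal D_p=\mathbb R\times(-\infty,1/p)$; $\Lambda_p^*(x)=\sup_{\tau\in\mathbb R^2}(\langle x,\tau\rangle-\Lambda_p(\tau))$. $\mathcal J_p$ is the set of $x\in\mathbb R^2$ for which there exists (a unique) $\tau(x)\in\mathcal D_p$ with $\nabla_\tau\Lambda_p(\tau(x))=x$. *)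

theory Defs
  imports "HOL-Analysis.Analysis" "HOL-Library.Extended_Real"
begin

definition fp :: "real \<Rightarrow> real \<Rightarrow> real" where
  "fp p x = exp (- (\<bar>x\<bar> powr p) / p) / (2 * p powr (1/p) * Gamma (1 + 1/p))"

definition mpq :: "real \<Rightarrow> real \<Rightarrow> real" where
  "mpq p q = (\<integral>x. \<bar>x\<bar> powr q * fp p x \<partial>lborel) powr (1/q)"

definition Lam :: "real \<Rightarrow> real \<Rightarrow> real \<times> real \<Rightarrow> real" where
  "Lam p q tau = ln (\<integral>y. exp (fst tau * \<bar>y\<bar> powr q + snd tau * \<bar>y\<bar> powr p) * fp p y \<partial>lborel)"

text \<open>D_p = R x (-infinity, 1/p), the set where Lambda_p is finite.\<close>
definition Dp :: "real \<Rightarrow> (real \<times> real) set" where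
  "Dp p = UNIV \<times> {..<1/p}"

text \<open>Legendre transform. Outside D_p, Lambda_p = +infinity, so those tau contribute -infinity
  to the supremum; hence the supremum can be taken over D_p. The value may be +infinity.\<close>
definition LamStar :: "real \<Rightarrow> real \<Rightarrow> real \<times> real \<Rightarrow> ereal" where
  "LamStar p q x = (SUP tau \<in> Dp p. ereal (inner x tau - Lam p q tau))"

definition Jp :: "real \<Rightarrow> real \<Rightarrow> (real \<times> real) set" where
  "Jp p q = {x. \<exists>tau \<in> Dp p. (Lam p q has_derivative (\<lambda>h. inner x h)) (at tau)}"

end

theory Submission
  imports Defs "HOL-Probability.Distributions"
begin

(* Substituting y -> (1 - p tau_2)^(-1/p) y in the integral defining Lambda_p shows that the
   affine bijection (tau_1, tau_2) -> (tau_1 s^(q/p), (1 - (1 - p tau_2) s)/p) of D_p shifts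
   Lambda_p by -(ln s)/p. Reindexing the supremum by this map gives, for every s > 0,
     Lambda_p^*(w s^(q/p), s) = Lambda_p^*(w, 1) + (s - 1 - ln s)/p.
   The constraint set is exactly {(z^q s^(q/p), s) : s > 0}, and s - 1 - ln s > 0 unless s = 1.
   Finally Lambda_p^* is finite at z^*: Lambda_p is convex (Hoelder), so a point where its gradient
   is z^* maximizes <z^*, tau> - Lambda_p(tau). *)

lemma INF_eq_and_argmin_eq_singleton:
  fixes f :: "'a \<Rightarrow> 'b::complete_linorder"
  assumes "x0 \<in> S" and "\<And>x. x \<in> S \<Longrightarrow> x \<noteq> x0 \<Longrightarrow> f x0 < f x"
  shows "(INF x\<in>S. f x) = f x0 \<and> {x \<in> S. f x = (INF y\<in>S. f y)} = {x0}"
proof -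
  have "(INF x\<in>S. f x) = f x0"
    using assms by (intro antisym INF_lower INF_greatest) (auto intro: order.strict_implies_order)
  with assms show ?thesis by force
qed

lemma convex_on_above_tangent:
  fixes f :: "'a::real_normed_vector \<Rightarrow> real"
  assumes conv: "convex_on C f" and "open C" "x \<in> C" "y \<in> C"
    and der: "(f has_derivative f') (at x)"
  shows "f x + f' (y - x) \<le> f y"
proof -
  define l where "l = (\<lambda>t::real. x + t *\<^sub>R (y - x))"
  define A where "A = l -` C"
  have l_comb: "l ((1 - t) * a + t * b) = (1 - t) *\<^sub>R l a + t *\<^sub>R l b" for t a b
    by (simp add: l_def algebra_simps)
  have "convex C" using conv by (rule convex_on_imp_convex)
  then have "convex A"
    unfolding A_def convex_alt by (simp add: l_comb convexD_alt)
  have "open A"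
    unfolding A_def l_def using \<open>open C\<close> by (intro continuous_open_vimage) (auto intro!: continuous_intros)
  have "convex_on A (f \<circ> l)"
  proof (rule convex_onI[OF _ \<open>convex A\<close>])
    fix t a b :: real assume "0 < t" "t < 1" "a \<in> A" "b \<in> A"
    then show "(f \<circ> l) ((1 - t) *\<^sub>R a + t *\<^sub>R b) \<le> (1 - t) * (f \<circ> l) a + t * (f \<circ> l) b"
      using convex_onD[OF conv, of t "l a" "l b"] by (simp add: A_def l_comb)
  qed
  have "(l has_derivative (\<lambda>h. h *\<^sub>R (y - x))) (at 0)"
    unfolding l_def by (auto intro!: derivative_eq_intros)
  with der have "(f \<circ> l has_derivative (\<lambda>h. f' (h *\<^sub>R (y - x)))) (at 0)"
    using diff_chain_at[of l _ 0 f f'] by (simp add: l_def o_def)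
  moreover have "(\<lambda>h. f' (h *\<^sub>R (y - x))) = (*) (f' (y - x))"
  proof -
    interpret linear f' using has_derivative_linear[OF der] .
    show ?thesis by (auto simp: fun_eq_iff scale)
  qed
  ultimately have "(f \<circ> l has_field_derivative f' (y - x)) (at 0)"
    unfolding has_field_derivative_def by metis
  then have "(f \<circ> l has_field_derivative f' (y - x)) (at 0 within A)"
    by (rule has_field_derivative_at_within)
  moreover have "0 \<in> interior A" "1 \<in> A"
    using assms \<open>open A\<close> by (simp_all add: A_def l_def interior_open)
  ultimately have "f' (y - x) * (1 - 0) \<le> (f \<circ> l) 1 - (f \<circ> l) 0"
    using convex_on_imp_above_tangent[OF \<open>convex_on A (f \<circ> l)\<close> convex_connected[OF \<open>convex A\<close>]]
    by blast
  then show ?thesis by (simp add: l_def)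
qed

lemma integral_pos_of_pos:
  fixes f :: "'a \<Rightarrow> real"
  assumes "integrable M f" "\<And>x. x \<in> space M \<Longrightarrow> 0 < f x" "emeasure M (space M) \<noteq> 0"
  shows "0 < integral\<^sup>L M f"
proof -
  have "0 \<le> integral\<^sup>L M f" using assms by (intro integral_nonneg_AE) (auto intro: less_imp_le)
  moreover have "integral\<^sup>L M f \<noteq> 0"
  proof
    assume "integral\<^sup>L M f = 0"
    then have "AE x in M. f x = 0"
      using integral_nonneg_eq_0_iff_AE[OF assms(1)] assms(2) by (auto intro: less_imp_le)
    then have "AE x in M. False"
      using assms(2) by (auto elim: AE_mp intro: AE_I2 simp: less_le)
    then show False using assms(3) by (simp add: eventually_False ae_filter_eq_bot_iff)
  qed
  ultimately show ?thesis by simp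
qed

lemma ln_integral_exp_convex:
  fixes u v w :: "'a \<Rightarrow> real" and \<theta> :: real
  assumes "integrable M (\<lambda>x. exp (u x) * w x)" "integrable M (\<lambda>x. exp (v x) * w x)"
    and "integrable M (\<lambda>x. exp (\<theta> * u x + (1 - \<theta>) * v x) * w x)"
    and A: "0 < (\<integral>x. exp (u x) * w x \<partial>M)" and B: "0 < (\<integral>x. exp (v x) * w x \<partial>M)"
    and "0 < (\<integral>x. exp (\<theta> * u x + (1 - \<theta>) * v x) * w x \<partial>M)"
    and "\<And>x. 0 \<le> w x" "0 \<le> \<theta>" "\<theta> \<le> 1"
  shows "ln (\<integral>x. exp (\<theta> * u x + (1 - \<theta>) * v x) * w x \<partial>M)
           \<le> \<theta> * ln (\<integral>x. exp (u x) * w x \<partial>M) + (1 - \<theta>) * ln (\<integral>x. exp (v x) * w x \<partial>M)"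
proof -
  define A where "A = (\<integral>x. exp (u x) * w x \<partial>M)"
  define B where "B = (\<integral>x. exp (v x) * w x \<partial>M)"
  define K where "K = exp (\<theta> * ln A + (1 - \<theta>) * ln B)"
  \<comment> \<open>Hoelder's inequality: convexity of exp applied to the integrands normalized by A and B.\<close>
  have pointwise: "exp (\<theta> * u x + (1 - \<theta>) * v x) * w x
      \<le> K * (\<theta> / A * (exp (u x) * w x) + (1 - \<theta>) / B * (exp (v x) * w x))" for x
  proof -
    have "exp (\<theta> * u x + (1 - \<theta>) * v x)
        = K * exp (\<theta> * (u x - ln A) + (1 - \<theta>) * (v x - ln B))"
      by (simp add: K_def flip: exp_add) (simp add: algebra_simps)
    also have "\<dots> \<le> K * (\<theta> * exp (u x - ln A) + (1 - \<theta>) * exp (v x - ln B))"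
      using convex_onD[OF exp_convex, of "1 - \<theta>" "u x - ln A" "v x - ln B"] assms
      by (intro mult_left_mono) (auto simp: K_def)
    also have "\<dots> = K * (\<theta> / A * exp (u x) + (1 - \<theta>) / B * exp (v x))"
      using A B by (simp add: A_def B_def exp_diff)
    finally have "exp (\<theta> * u x + (1 - \<theta>) * v x)
        \<le> K * (\<theta> / A * exp (u x) + (1 - \<theta>) / B * exp (v x))" .
    from mult_right_mono[OF this assms(7)] show ?thesis by (simp add: algebra_simps)
  qed
  have "(\<integral>x. exp (\<theta> * u x + (1 - \<theta>) * v x) * w x \<partial>M)
      \<le> (\<integral>x. K * (\<theta> / A * (exp (u x) * w x) + (1 - \<theta>) / B * (exp (v x) * w x)) \<partial>M)"
    using assms pointwise by (intro integral_mono) auto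
  also have "\<dots> = K" using A B assms(1,2) by (simp add: A_def B_def)
  finally have "ln (\<integral>x. exp (\<theta> * u x + (1 - \<theta>) * v x) * w x \<partial>M) \<le> ln K"
    using assms(6) by (intro ln_mono)
  then show ?thesis by (simp add: K_def A_def B_def)
qed

lemma integrable_exp_neg_abs: "integrable lborel (\<lambda>y::real. exp (- \<bar>y\<bar>))"
proof -
  let ?e = "exponential_density (1::real)"
  have "prob_space (density lborel ?e)" by (rule prob_space_exponential_density) simp
  then have "(\<integral>\<^sup>+x. ennreal (?e x) \<partial>lborel) = 1"
    using prob_space.emeasure_space_1 by (fastforce simp: emeasure_density)
  then have ie: "integrable lborel ?e"
    by (intro integrableI_nonneg) (auto simp: exponential_density_def)
  \<comment> \<open>exp (- \<bar>y\<bar>) is dominated by the exponential density plus its reflection.\<close>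
  have "integrable lborel (\<lambda>x. ?e (0 + (-1) * x))"
    using lborel_integrable_real_affine_iff[of "-1" ?e 0] ie by simp
  with ie have "integrable lborel (\<lambda>x. ?e x + ?e (0 + (-1) * x))" by simp
  then show ?thesis
    by (rule Bochner_Integration.integrable_bound) (auto simp: exponential_density_def)
qed

lemma powr_diff_le_affine:
  fixes a b p q :: real
  assumes "1 < p" "q < p" "0 \<le> q" "0 < b"
  obtains K where "\<And>r. 0 \<le> r \<Longrightarrow> a * r powr q - b * r powr p \<le> K - r"
proof -
  have "((\<lambda>r. \<bar>a\<bar> * r powr (q - p) + r powr (1 - p)) \<longlongrightarrow> \<bar>a\<bar> * 0 + 0) at_top"
    using assms by (intro tendsto_intros tendsto_neg_powr filterlim_ident) auto
  then have "eventually (\<lambda>r. \<bar>a\<bar> * r powr (q - p) + r powr (1 - p) < b) at_top"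
    using assms(4) by (intro order_tendstoD) auto
  then obtain R where R: "1 \<le> R" "\<And>r. R \<le> r \<Longrightarrow> \<bar>a\<bar> * r powr (q - p) + r powr (1 - p) < b"
    unfolding eventually_at_top_linorder by (metis max.bounded_iff max.cobounded2)
  have "a * r powr q - b * r powr p \<le> (\<bar>a\<bar> * R powr q + R) - r" if "0 \<le> r" for r
  proof (cases "R \<le> r")
    case True
    then have "0 < r" using R by linarith
    have "r powr p * (\<bar>a\<bar> * r powr (q - p) + r powr (1 - p)) \<le> r powr p * b"
      using R(2)[OF True] by (intro mult_left_mono) auto
    moreover have "r powr p * (\<bar>a\<bar> * r powr (q - p) + r powr (1 - p)) = \<bar>a\<bar> * r powr q + r"
      using \<open>0 < r\<close> by (simp add: algebra_simps flip: powr_add)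
    moreover have "a * r powr q \<le> \<bar>a\<bar> * r powr q" by (intro mult_right_mono) auto
    moreover have "0 \<le> \<bar>a\<bar> * R powr q + R" using R by auto
    ultimately show ?thesis by (simp add: algebra_simps)
  next
    case False
    have "r powr q \<le> R powr q" using False that assms by (intro powr_mono2) auto
    then have "a * r powr q \<le> \<bar>a\<bar> * R powr q"
      by (meson abs_ge_self abs_ge_zero order.trans mult_left_mono mult_right_mono powr_ge_zero)
    moreover have "0 \<le> b * r powr p" using assms by auto
    ultimately show ?thesis using False that by linarith
  qed
  then show ?thesis by (rule that)
qed

lemma integrable_exp_powr_diff:
  fixes a b p q :: real
  assumes "1 < p" "q < p" "0 \<le> q" "0 < b"
  shows "integrable lborel (\<lambda>y::real. exp (a * \<bar>y\<bar> powr q - b * \<bar>y\<bar> powr p))"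
proof -
  obtain K where K: "\<And>r. 0 \<le> r \<Longrightarrow> a * r powr q - b * r powr p \<le> K - r"
    using powr_diff_le_affine[OF assms] by blast
  have "integrable lborel (\<lambda>y::real. exp K * exp (- \<bar>y\<bar>))"
    using integrable_exp_neg_abs by simp
  then show ?thesis
  proof (rule Bochner_Integration.integrable_bound)
    show "AE y in lborel. norm (exp (a * \<bar>y\<bar> powr q - b * \<bar>y\<bar> powr p)) \<le> norm (exp K * exp (- \<bar>y\<bar>))"
      using K by (intro AE_I2) (simp flip: exp_add)
  qed measurable
qed

lemma ln_less_minus_one:
  fixes s :: real
  assumes "0 < s" "s \<noteq> 1"
  shows "ln s < s - 1"
proof -
  define u where "u = sqrt s"
  have u: "0 < u" "u \<noteq> 1" "s = u * u" using assms by (auto simp: u_def)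
  have "ln s = 2 * ln u" using u by (simp add: ln_mult)
  also have "\<dots> \<le> 2 * (u - 1)" using ln_le_minus_one[OF u(1)] by simp
  also have "\<dots> < s - 1"
  proof -
    have "0 < (u - 1)\<^sup>2" using u(2) by simp
    then show ?thesis using u(3) by (simp add: power2_eq_square algebra_simps)
  qed
  finally show ?thesis .
qed

lemma powr_constraint_solve:
  fixes p q t1 t2 z :: real
  assumes "0 < q" "0 < t1" "0 < t2" "t1 powr (1/q) * t2 powr (-1/p) = z"
  shows "t1 = z powr q * t2 powr (q/p)"
proof -
  have "0 < z" using assms(2-4) by auto
  have "t1 = (t1 powr (1/q)) powr q" using assms(1,2) by (simp add: powr_powr)
  also have "t1 powr (1/q) = z * t2 powr (1/p)"
    using assms(3,4) by (auto simp: mult.assoc simp flip: powr_add)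
  also have "(z * t2 powr (1/p)) powr q = z powr q * t2 powr (q/p)"
    using \<open>0 < z\<close> assms(3) by (simp add: powr_mult powr_powr)
  finally show ?thesis .
qed

lemma fp_pos: "0 < p \<Longrightarrow> 0 < fp p y"
  unfolding fp_def by (intro divide_pos_pos mult_pos_pos Gamma_real_pos) (auto intro: add_pos_pos)

definition Lam_integrand :: "real \<Rightarrow> real \<Rightarrow> real \<times> real \<Rightarrow> real \<Rightarrow> real" where
  "Lam_integrand p q tau y = exp (fst tau * \<bar>y\<bar> powr q + snd tau * \<bar>y\<bar> powr p) * fp p y"

lemma Lam_eq_ln_integral: "Lam p q tau = ln (integral\<^sup>L lborel (Lam_integrand p q tau))"
  by (simp add: Lam_def Lam_integrand_def[abs_def])

lemma Lam_integrand_eq: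
  "Lam_integrand p q tau y = exp (fst tau * \<bar>y\<bar> powr q - (1/p - snd tau) * \<bar>y\<bar> powr p)
     / (2 * p powr (1/p) * Gamma (1 + 1/p))"
  unfolding Lam_integrand_def fp_def by (simp add: field_simps flip: exp_add)

lemma mem_Dp_iff [simp]: "tau \<in> Dp p \<longleftrightarrow> snd tau < 1/p"
  by (cases tau) (simp add: Dp_def)

lemma convex_Dp: "convex (Dp p)"
  unfolding Dp_def by (intro convex_Times) auto

lemma open_Dp: "open (Dp p)"
  unfolding Dp_def by (intro open_Times) auto

lemma integrable_Lam_integrand:
  assumes "1 \<le> q" "q < p" "tau \<in> Dp p"
  shows "integrable lborel (Lam_integrand p q tau)"
  unfolding Lam_integrand_eq[abs_def]
  by (intro integrable_divide integrable_exp_powr_diff) (use assms in auto)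

lemma Lam_integral_pos:
  assumes "1 \<le> q" "q < p" "tau \<in> Dp p"
  shows "0 < integral\<^sup>L lborel (Lam_integrand p q tau)"
  using assms
  by (intro integral_pos_of_pos integrable_Lam_integrand) (auto simp: Lam_integrand_def intro!: mult_pos_pos fp_pos)

lemma Lam_scaling:
  fixes p q t1 t2 :: real
  assumes "1 \<le> q" "q < p" "t2 < 1/p"
  shows "Lam p q (t1, t2) = - ln (1 - p * t2) / p + Lam p q (t1 * (1 - p * t2) powr (- q / p), 0)"
proof -
  have "0 < p" using assms by linarith
  define r where "r = 1 - p * t2"
  have "0 < r" using assms \<open>0 < p\<close> by (simp add: r_def field_simps)
  define c where "c = r powr (-1/p)"
  have "0 < c" using \<open>0 < r\<close> by (simp add: c_def)
  have "c powr p = r powr ((-1/p) * p)" unfolding c_def by (rule powr_powr)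
  also have "\<dots> = 1 / r" using \<open>0 < r\<close> \<open>0 < p\<close> by (simp add: powr_minus_divide)
  finally have cp: "(1/p - t2) * c powr p = 1/p"
    using \<open>0 < r\<close> \<open>0 < p\<close> by (simp add: r_def field_simps)
  have cq: "c powr q = r powr (- q / p)"
    using \<open>0 < r\<close> by (simp add: c_def powr_powr)
  let ?f = "Lam_integrand p q (t1, t2)" and ?g = "Lam_integrand p q (t1 * r powr (- q / p), 0)"
  have subst: "?f (0 + c * y) = ?g y" for y
  proof -
    have "\<bar>c * y\<bar> powr q = c powr q * \<bar>y\<bar> powr q" "\<bar>c * y\<bar> powr p = c powr p * \<bar>y\<bar> powr p"
      using \<open>0 < c\<close> by (auto simp: abs_mult powr_mult)
    then show ?thesis
      unfolding Lam_integrand_eq fst_conv snd_conv by (simp add: cq mult.assoc[symmetric] cp)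
  qed
  have "integral\<^sup>L lborel ?f = c * integral\<^sup>L lborel (\<lambda>y. ?f (0 + c * y))"
    using lborel_integral_real_affine[of c ?f 0] \<open>0 < c\<close> by simp
  also have "\<dots> = c * integral\<^sup>L lborel ?g"
    by (simp only: subst)
  finally have "integral\<^sup>L lborel ?f = c * integral\<^sup>L lborel ?g" .
  moreover have "0 < integral\<^sup>L lborel ?g"
    using assms \<open>0 < p\<close> by (intro Lam_integral_pos) auto
  ultimately have "Lam p q (t1, t2) = ln c + Lam p q (t1 * r powr (- q / p), 0)"
    using \<open>0 < c\<close> by (simp add: Lam_eq_ln_integral ln_mult)
  moreover have "ln c = - ln r / p" using \<open>0 < r\<close> by (simp add: c_def ln_powr)
  ultimately show ?thesis unfolding r_def[symmetric] by simp
qed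

lemma convex_on_Lam:
  assumes "1 \<le> q" "q < p"
  shows "convex_on (Dp p) (Lam p q)"
proof (rule convex_onI[OF _ convex_Dp])
  fix t :: real and a b :: "real \<times> real"
  assume t: "0 < t" "t < 1" and ab: "a \<in> Dp p" "b \<in> Dp p"
  define u where "u y = fst a * \<bar>y\<bar> powr q + snd a * \<bar>y\<bar> powr p" for y
  define v where "v y = fst b * \<bar>y\<bar> powr q + snd b * \<bar>y\<bar> powr p" for y
  define m where "m = (1 - t) *\<^sub>R a + t *\<^sub>R b"
  have "m \<in> Dp p" unfolding m_def using t ab by (intro convexD[OF convex_Dp]) auto
  have F_m: "Lam_integrand p q m = (\<lambda>y. exp ((1 - t) * u y + (1 - (1 - t)) * v y) * fp p y)"
    by (simp add: Lam_integrand_def u_def v_def m_def fun_eq_iff algebra_simps)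
  have F_a: "Lam_integrand p q a = (\<lambda>y. exp (u y) * fp p y)"
    and F_b: "Lam_integrand p q b = (\<lambda>y. exp (v y) * fp p y)"
    by (simp_all add: Lam_integrand_def u_def v_def fun_eq_iff)
  note int = integrable_Lam_integrand[OF assms] Lam_integral_pos[OF assms]
  have "0 \<le> fp p y" for y using assms by (intro less_imp_le fp_pos) linarith
  have "Lam p q m = ln (\<integral>y. exp ((1 - t) * u y + (1 - (1 - t)) * v y) * fp p y \<partial>lborel)"
    by (simp only: Lam_eq_ln_integral F_m)
  also have "\<dots> \<le> (1 - t) * ln (\<integral>y. exp (u y) * fp p y \<partial>lborel)
                  + (1 - (1 - t)) * ln (\<integral>y. exp (v y) * fp p y \<partial>lborel)"
    using int[OF ab(1)] int[OF ab(2)] int[OF \<open>m \<in> Dp p\<close>] t \<open>\<And>y. 0 \<le> fp p y\<close>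
    unfolding F_a F_b F_m by (intro ln_integral_exp_convex) auto
  also have "\<dots> = (1 - t) * Lam p q a + t * Lam p q b"
    by (simp add: Lam_eq_ln_integral F_a F_b)
  finally show "Lam p q ((1 - t) *\<^sub>R a + t *\<^sub>R b) \<le> (1 - t) * Lam p q a + t * Lam p q b"
    by (simp add: m_def)
qed

lemma LamStar_eq_at_gradient:
  assumes "1 \<le> q" "q < p" "tau0 \<in> Dp p"
    and "(Lam p q has_derivative (\<lambda>h. inner x h)) (at tau0)"
  shows "LamStar p q x = ereal (inner x tau0 - Lam p q tau0)"
  unfolding LamStar_def
proof (rule antisym)
  have "inner x tau - Lam p q tau \<le> inner x tau0 - Lam p q tau0" if "tau \<in> Dp p" for tau
    using convex_on_above_tangent[OF convex_on_Lam[OF assms(1,2)] open_Dp assms(3) that assms(4)]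
    by (simp add: inner_diff_right)
  then show "(SUP tau\<in>Dp p. ereal (inner x tau - Lam p q tau)) \<le> ereal (inner x tau0 - Lam p q tau0)"
    by (intro SUP_least) simp
  show "ereal (inner x tau0 - Lam p q tau0) \<le> (SUP tau\<in>Dp p. ereal (inner x tau - Lam p q tau))"
    using assms(3) by (rule SUP_upper)
qed

definition Dp_rescale :: "real \<Rightarrow> real \<Rightarrow> real \<Rightarrow> real \<times> real \<Rightarrow> real \<times> real" where
  "Dp_rescale p q s tau = (fst tau * s powr (q/p), (1 - (1 - p * snd tau) * s) / p)"

lemma Dp_rescale_mem:
  assumes "0 < p" "0 < s" "tau \<in> Dp p"
  shows "Dp_rescale p q s tau \<in> Dp p"
  using assms by (simp add: Dp_rescale_def field_simps)

lemma Dp_rescale_inverse: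
  assumes "0 < p" "0 < s"
  shows "Dp_rescale p q s (Dp_rescale p q (1/s) tau) = tau"
  using assms by (simp add: Dp_rescale_def prod_eq_iff powr_divide field_simps)

lemma Dp_rescale_image:
  assumes "0 < p" "0 < s"
  shows "Dp_rescale p q s ` Dp p = Dp p"
proof
  show "Dp_rescale p q s ` Dp p \<subseteq> Dp p" using assms Dp_rescale_mem by blast
  show "Dp p \<subseteq> Dp_rescale p q s ` Dp p"
  proof
    fix tau assume "tau \<in> Dp p"
    then have "Dp_rescale p q (1/s) tau \<in> Dp p" using assms by (intro Dp_rescale_mem) auto
    then show "tau \<in> Dp_rescale p q s ` Dp p"
      using Dp_rescale_inverse[OF assms] by (metis image_eqI)
  qed
qed

lemma Lam_Dp_rescale:
  assumes "1 \<le> q" "q < p" "tau \<in> Dp p" "0 < s"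
  shows "Lam p q (Dp_rescale p q s tau) = Lam p q tau - ln s / p"
proof -
  obtain t1 t2 where tau: "tau = (t1, t2)" by fastforce
  have "0 < p" using assms by linarith
  define r where "r = 1 - p * t2"
  have "0 < r" using assms \<open>0 < p\<close> by (simp add: tau r_def field_simps)
  have rescale: "Dp_rescale p q s tau = (t1 * s powr (q/p), (1 - r * s) / p)"
    by (simp add: Dp_rescale_def tau r_def)
  have "(1 - r * s) / p < 1/p"
    using \<open>0 < r\<close> assms(4) \<open>0 < p\<close> by (simp add: divide_strict_right_mono)
  moreover have "1 - p * ((1 - r * s) / p) = r * s" using \<open>0 < p\<close> by simp
  moreover have "t1 * s powr (q/p) * (r * s) powr (- q / p) = t1 * r powr (- q / p)"
    using \<open>0 < r\<close> assms(4) by (simp add: powr_mult powr_minus field_simps)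
  ultimately have "Lam p q (Dp_rescale p q s tau) = - ln (r * s) / p + Lam p q (t1 * r powr (- q / p), 0)"
    using Lam_scaling[OF assms(1,2), of "(1 - r * s) / p" "t1 * s powr (q/p)"]
    by (simp only: rescale)
  moreover have "Lam p q tau = - ln r / p + Lam p q (t1 * r powr (- q / p), 0)"
    using Lam_scaling[OF assms(1,2), of t2 t1] assms(3) by (simp add: tau r_def)
  ultimately show ?thesis
    using \<open>0 < r\<close> assms(4) by (simp add: ln_mult diff_divide_distrib add_divide_distrib)
qed

lemma LamStar_rescale:
  assumes "1 \<le> q" "q < p" "0 < s"
  shows "LamStar p q (w * s powr (q/p), s) = LamStar p q (w, 1) + ereal ((s - 1 - ln s) / p)"
proof -
  have "0 < p" using assms by linarith
  define G where "G tau = ereal (inner (w, 1) tau - Lam p q tau)" for tau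
  have "ereal (inner (w * s powr (q/p), s) tau - Lam p q tau)
          = G (Dp_rescale p q s tau) + ereal ((s - 1 - ln s) / p)" if "tau \<in> Dp p" for tau
    unfolding G_def Lam_Dp_rescale[OF assms(1,2) that assms(3)] using \<open>0 < p\<close>
    by (simp add: Dp_rescale_def inner_prod_def field_simps)
  then have "LamStar p q (w * s powr (q/p), s)
               = (SUP tau\<in>Dp p. G (Dp_rescale p q s tau) + ereal ((s - 1 - ln s) / p))"
    unfolding LamStar_def by (intro SUP_cong) auto
  also have "\<dots> = (SUP tau\<in>Dp p. G (Dp_rescale p q s tau)) + ereal ((s - 1 - ln s) / p)"
    by (rule SUP_ereal_add_left) (auto simp: Dp_def)
  also have "(SUP tau\<in>Dp p. G (Dp_rescale p q s tau)) = (SUP tau\<in>Dp p. G tau)"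
    using Dp_rescale_image[OF \<open>0 < p\<close> assms(3), of q] by (metis image_image)
  finally show ?thesis by (simp add: LamStar_def G_def)
qed

theorem lemma2p4:
  fixes p q z :: real
  assumes "1 \<le> q" and "q < p"
    and "z > mpq p q"
    and "(z powr q, 1) \<in> Jp p q"
  defines "S \<equiv> {t :: real \<times> real. fst t > 0 \<and> snd t > 0 \<and>
                  fst t powr (1/q) * snd t powr (-1/p) = z}"
  shows "(INF t \<in> S. LamStar p q t) = LamStar p q (z powr q, 1)
     \<and> {t \<in> S. LamStar p q t = (INF s \<in> S. LamStar p q s)} = {(z powr q, 1)}"
proof (rule INF_eq_and_argmin_eq_singleton)
  have "0 < p" "0 < q" using assms(1,2) by linarith+
  have "0 < z" using assms(3) mpq_def[of p q] by (metis powr_ge_zero order.strict_trans1)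
  then show "(z powr q, 1) \<in> S" using \<open>0 < q\<close> by (simp add: S_def powr_powr)
  obtain tau0 where tau0: "tau0 \<in> Dp p"
    and grad: "(Lam p q has_derivative (\<lambda>h. inner (z powr q, 1) h)) (at tau0)"
    using assms(4) by (auto simp: Jp_def)
  note finite = LamStar_eq_at_gradient[OF assms(1,2) tau0 grad]
  fix t assume "t \<in> S" "t \<noteq> (z powr q, 1)"
  then have "0 < snd t" and t: "t = (z powr q * snd t powr (q/p), snd t)"
    using powr_constraint_solve[OF \<open>0 < q\<close>] by (auto simp: S_def prod_eq_iff)
  with \<open>t \<noteq> (z powr q, 1)\<close> have "snd t \<noteq> 1" by auto
  then have "0 < (snd t - 1 - ln (snd t)) / p"
    using ln_less_minus_one[OF \<open>0 < snd t\<close>] \<open>0 < p\<close> by simp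
  then show "LamStar p q (z powr q, 1) < LamStar p q t"
    using LamStar_rescale[OF assms(1,2) \<open>0 < snd t\<close>, of "z powr q"] finite by (subst t) simp
qed

end
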